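(* Let $n\ge 1$ and let $\omega_1,\dots,\omega_n>0$ be pairwise distinct, and let $z_i=2/\omega_i$. Consider on the $n$-torus $\mathbb{T}^n=(\mathbb{R}/2\pi\mathbb{Z})^n$ the control system $$\dot\theta_i=\omega_i+z_i(1-\cos\theta_i)\,u(t),\qquad i=1,\dots,n,$$ with a common real-valued, amplitude-unconstrained input $u$. Then this system is controllable: for every $\Theta_0,\Theta_1\in\mathbb{T}^n$ there exist $T\ge0$ and an admissible control $u$ on $[0,T]$ steering $\Theta(0)=\Theta_0$ to $\Theta(T)=\Theta_1$.
   Context: This is an ensemble of uncoupled neurons described by the SNIPER phase model: baseline dynamics $f(\theta)=\omega$ (natural frequency) and phase response curve $Z(\theta)=z(1-\cos\theta)$. *)

theory Defs
  imports Complex_Main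
begin

text \<open>States of the n-torus are represented by real representatives
  \<open>'n \<Rightarrow> real\<close> (index type \<open>'n\<close> finite, n = CARD('n));
  two representatives denote the same point of the torus iff they agree
  componentwise modulo 2 pi.\<close>
definition torus_eq :: "('n \<Rightarrow> real) \<Rightarrow> ('n \<Rightarrow> real) \<Rightarrow> bool" where
  "torus_eq x y \<longleftrightarrow> (\<forall>i. \<exists>k::int. x i - y i = 2 * pi * real_of_int k)"

text \<open>Admissible controls on [0,T]: piecewise constant real-valued functions
  (finitely many switching times; values at switching times irrelevant).
  No amplitude constraint.\<close>
definition admissible_control :: "real \<Rightarrow> (real \<Rightarrow> real) \<Rightarrow> bool" where
  "admissible_control T u \<longleftrightarrow>
     (\<exists>S. finite S \<and> 0 \<in> S \<and> T \<in> S \<and> S \<subseteq> {0..T} \<and>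
        (\<forall>a\<in>S. \<forall>b\<in>S. a < b \<and> {a<..<b} \<inter> S = {} \<longrightarrow>
            (\<exists>c. \<forall>t\<in>{a<..<b}. u t = c)))"

definition sniper_trajectory ::
  "('n \<Rightarrow> real) \<Rightarrow> ('n \<Rightarrow> real) \<Rightarrow> (real \<Rightarrow> real) \<Rightarrow> real \<Rightarrow> (real \<Rightarrow> 'n \<Rightarrow> real) \<Rightarrow> bool"
where
  "sniper_trajectory \<omega> z u T \<theta> \<longleftrightarrow>
     (\<forall>i. continuous_on {0..T} (\<lambda>t. \<theta> t i)) \<and>
     (\<exists>S. finite S \<and> (\<forall>t\<in>{0<..<T} - S. \<forall>i.
        ((\<lambda>s. \<theta> s i) has_real_derivative
           (\<omega> i + z i * (1 - cos (\<theta> t i)) * u t)) (at t)))"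

end

theory Submission
  imports Defs "HOL-Analysis.Analysis"
begin

(* For a constant input c with nu = sqrt (omega^2 + 4c) > 0 the scalar
      equation is solved explicitly by  theta(t) = G (nu t + G^-1 theta(0)), where
      G p = p + 2 arctan ((r-1) sin p / ((r+1) + (1-r) cos p)), r = omega/nu, is an increasing
      bijection of the reals with |G p - p| < pi.  Hence in time t the phase advances by
      nu t up to an error of at most 2 pi, and the endpoint depends continuously on t.
   2. Piecewise constant controls.  Concatenating such segments gives admissible controls and
      trajectories; after k segments each phase has advanced by  sum nu(c) tau  up to 2 pi k.
   3. Spanning.  Since the omega_i are distinct, the vectors (nu(omega_i, c))_i, c ranging over
      the admissible constants, span R^n (all derivatives in c of a vanishing linear
      combination vanish, which forces a vanishing generalized power sum).  So finitely many
      controls suffice, and their durations can be chosen as continuous functions of the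
      desired displacement y, nonnegative near some point p of R^n.
   4. Topology.  The resulting endpoint map differs from y by a bounded amount; by Brouwer's
      fixed point theorem it attains every displacement near p, in particular one congruent
      to Theta1 - Theta0 modulo 2 pi. *)

subsection \<open>The explicit flow for a constant control\<close>

definition den :: "real \<Rightarrow> real \<Rightarrow> real" where
  "den r p = (r + 1) + (1 - r) * cos p"

lemma den_pos: "r > 0 \<Longrightarrow> den r p > 0"
proof -
  assume r: "r > 0"
  have "\<bar>(1 - r) * cos p\<bar> \<le> \<bar>1 - r\<bar>"
    by (simp add: abs_mult mult_left_le)
  thus ?thesis using r unfolding den_def by (cases "r \<le> 1") (auto simp: abs_if split: if_splits)
qed

text \<open>The phase transformation \<open>G\<^sub>r\<close>, a lift of \<open>\<theta> \<mapsto> 2 arctan (r tan (\<theta>/2))\<close> to the reals.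
  It conjugates the constant-control dynamics to uniform rotation.\<close>
definition Gf :: "real \<Rightarrow> real \<Rightarrow> real" where
  "Gf r p = p + 2 * arctan ((r - 1) * sin p / den r p)"

lemma Gf_bound: "\<bar>Gf r p - p\<bar> < pi"
  using arctan_bounded[of "(r - 1) * sin p / den r p"] unfolding Gf_def by auto

text \<open>Up to the factor 2, \<open>Qd r p\<close> is \<open>den\<^sup>2 + ((r - 1) sin p)\<^sup>2\<close>; it appears in both the
  derivative of \<open>G\<^sub>r\<close> and in \<open>cos \<circ> G\<^sub>r\<close>.\<close>
definition Qd :: "real \<Rightarrow> real \<Rightarrow> real" where
  "Qd r p = (1 + r\<^sup>2) + (1 - r\<^sup>2) * cos p"

lemma Qd_eq: "den r p ^ 2 + ((r - 1) * sin p) ^ 2 = 2 * Qd r p"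
proof -
  have "\<And>s k::real. s^2 + k^2 = 1 \<Longrightarrow>
      ((r + 1) + (1 - r) * k) ^ 2 + ((r - 1) * s) ^ 2 = 2 * ((1 + r\<^sup>2) + (1 - r\<^sup>2) * k)"
    by algebra
  then show ?thesis unfolding den_def Qd_def by simp
qed

lemma Qd_pos: "r > 0 \<Longrightarrow> Qd r p > 0"
proof -
  assume r: "r > 0"
  have "den r p ^ 2 > 0" using den_pos[OF r, of p] by simp
  moreover have "((r - 1) * sin p) ^ 2 \<ge> 0" by simp
  ultimately show ?thesis using Qd_eq[of r p] by linarith
qed

lemma Gf_deriv:
  assumes r: "r > 0"
  shows "(Gf r has_real_derivative (2 * r / Qd r p)) (at p)"
proof -
  have D: "den r p \<noteq> 0" using den_pos[OF r, of p] by linarith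
  have Q: "Qd r p > 0" using Qd_pos[OF r] .
  define N where "N = (r - 1) * cos p * den r p - (r - 1) * sin p * ((1 - r) * - sin p)"
  have "(Gf r has_real_derivative
      1 + 2 * (inverse (1 + ((r - 1) * sin p / den r p)\<^sup>2) * (N / (den r p * den r p)))) (at p)"
    using D unfolding Gf_def den_def N_def by (auto intro!: derivative_eq_intros)
  moreover have "1 + 2 * (inverse (1 + ((r - 1) * sin p / den r p)\<^sup>2) * (N / (den r p * den r p)))
      = 2 * r / Qd r p"
  proof -
    have e1: "1 + ((r - 1) * sin p / den r p)\<^sup>2 = 2 * Qd r p / (den r p)^2"
      using Qd_eq[of r p] D by (simp add: field_simps power2_eq_square)
    have eN: "N = (r - 1) * ((r + 1) * cos p + (1 - r))"
    proof -
      have "\<And>s k::real. s^2 + k^2 = 1 \<Longrightarrow>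
          (r - 1) * k * ((r + 1) + (1 - r) * k) - (r - 1) * s * ((1 - r) * - s)
            = (r - 1) * ((r + 1) * k + (1 - r))" by algebra
      then show ?thesis unfolding N_def den_def by simp
    qed
    have "1 + 2 * (inverse (2 * Qd r p / (den r p)^2) * (N / (den r p * den r p)))
        = 1 + N / Qd r p"
      using D Q by (simp add: field_simps power2_eq_square)
    also have "\<dots> = 2 * r / Qd r p"
    proof -
      have "Qd r p + N = 2 * r"
        unfolding eN Qd_def by (simp add: algebra_simps power2_eq_square)
      then show ?thesis using Q by (simp add: field_simps)
    qed
    finally show ?thesis unfolding e1 .
  qed
  ultimately show ?thesis by simp
qed

lemma cos_2arctan: "cos (2 * arctan y) = (1 - y\<^sup>2) / (1 + y\<^sup>2)"
proof -
  have q: "sqrt (1 + y\<^sup>2) ^ 2 = 1 + y\<^sup>2" by (simp add: add_pos_nonneg)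
  have "cos (2 * arctan y) = cos (arctan y)^2 - sin (arctan y)^2" by (rule cos_double)
  also have "\<dots> = (1 - y\<^sup>2) / (1 + y\<^sup>2)" unfolding cos_arctan sin_arctan power_divide q
    using add_pos_nonneg[OF zero_less_one zero_le_power2[of y]] by (simp add: field_simps)
  finally show ?thesis .
qed

lemma sin_2arctan: "sin (2 * arctan y) = 2 * y / (1 + y\<^sup>2)"
proof -
  have q: "sqrt (1 + y\<^sup>2) * sqrt (1 + y\<^sup>2) = 1 + y\<^sup>2" by (simp add: add_pos_nonneg)
  have "sin (2 * arctan y) = 2 * sin (arctan y) * cos (arctan y)" by (rule sin_double)
  also have "\<dots> = 2 * y / (1 + y\<^sup>2)" unfolding cos_arctan sin_arctan by (simp add: q)
  finally show ?thesis .
qed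

text \<open>The phase response \<open>1 - cos\<close> transforms under \<open>G\<^sub>r\<close> by the same factor \<open>Qd\<close>.\<close>
lemma cos_Gf:
  assumes r: "r > 0"
  shows "1 - cos (Gf r p) = 2 * r\<^sup>2 * (1 - cos p) / Qd r p"
proof -
  define y where "y = (r - 1) * sin p / den r p"
  have D: "den r p \<noteq> 0" using den_pos[OF r, of p] by linarith
  have Q: "Qd r p > 0" using Qd_pos[OF r] .
  have e1: "1 + y\<^sup>2 = 2 * Qd r p / (den r p)^2"
    using Qd_eq[of r p] D unfolding y_def by (simp add: field_simps power2_eq_square)
  have "cos (Gf r p) = cos p * ((1 - y\<^sup>2) / (1 + y\<^sup>2)) - sin p * (2 * y / (1 + y\<^sup>2))"
    unfolding Gf_def y_def[symmetric] by (simp add: cos_add cos_2arctan sin_2arctan)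
  also have "\<dots> = (cos p * ((den r p)^2 - ((r-1) * sin p)^2)
                    - 2 * sin p * ((r - 1) * sin p) * den r p) / (2 * Qd r p)"
    unfolding e1 using D Q by (simp add: y_def field_simps power2_eq_square)
  also have "cos p * ((den r p)^2 - ((r-1) * sin p)^2) - 2 * sin p * ((r - 1) * sin p) * den r p
          = 2 * Qd r p - 4 * r\<^sup>2 * (1 - cos p)"
  proof -
    have "\<And>s k::real. s^2 + k^2 = 1 \<Longrightarrow>
        k * (((r + 1) + (1 - r) * k)^2 - ((r-1) * s)^2) - 2 * s * ((r - 1) * s) * ((r + 1) + (1 - r) * k)
          = 2 * ((1 + r\<^sup>2) + (1 - r\<^sup>2) * k) - 4 * r\<^sup>2 * (1 - k)" by algebra
    then show ?thesis unfolding den_def Qd_def by simp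
  qed
  finally show ?thesis using Q by (simp add: field_simps)
qed

lemma Gf_isCont: "r > 0 \<Longrightarrow> isCont (Gf r) p"
  using Gf_deriv DERIV_isCont by blast

lemma Gf_strict_mono: assumes r: "r > 0" shows "strict_mono (Gf r)"
proof (rule strict_monoI)
  fix a b :: real assume ab: "a < b"
  have "DERIV (Gf r) x :> 2 * r / Qd r x \<and> 2 * r / Qd r x > 0" for x
    using Gf_deriv[OF r] Qd_pos[OF r] r by simp
  then show "Gf r a < Gf r b" by (blast intro: DERIV_pos_imp_increasing[OF ab])
qed

lemma Gf_surj: assumes r: "r > 0" shows "\<exists>p. Gf r p = x"
proof -
  have "Gf r (x - pi) \<le> x" and "x \<le> Gf r (x + pi)"
    using Gf_bound[of r "x - pi"] Gf_bound[of r "x + pi"] by linarith+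
  then show ?thesis using IVT[of "Gf r" "x - pi" x "x + pi"] Gf_isCont[OF r] by auto
qed

definition Ginv :: "real \<Rightarrow> real \<Rightarrow> real" where
  "Ginv r x = (THE p. Gf r p = x)"

lemma Gf_Ginv: assumes r: "r > 0" shows "Gf r (Ginv r x) = x"
proof -
  have "\<exists>!p. Gf r p = x"
  proof (rule ex_ex1I)
    show "\<exists>p. Gf r p = x" by (rule Gf_surj[OF r])
  next
    fix p q assume "Gf r p = x" "Gf r q = x"
    then show "p = q" using strict_mono_eq[OF Gf_strict_mono[OF r]] by metis
  qed
  then show ?thesis unfolding Ginv_def by (rule theI')
qed

lemma Ginv_Gf: assumes r: "r > 0" shows "Ginv r (Gf r p) = p"
  using Gf_Ginv[OF r, of "Gf r p"] strict_mono_eq[OF Gf_strict_mono[OF r]] by metis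

lemma Ginv_bound: "r > 0 \<Longrightarrow> \<bar>Ginv r x - x\<bar> < pi"
  using Gf_bound[of r "Ginv r x"] Gf_Ginv[of r x] by auto

lemma Ginv_isCont: assumes r: "r > 0" shows "isCont (Ginv r) x"
proof -
  have "isCont (Ginv r) (Gf r (Ginv r x))"
    by (rule isCont_inverse_function[of 1]) (use r Ginv_Gf Gf_isCont in auto)
  thus ?thesis using Gf_Ginv[OF r] by simp
qed

text \<open>The rotation speed \<open>\<nu> = \<surd>(\<omega>\<^sup>2 + 4c)\<close> of a neuron with frequency \<open>\<omega>\<close> under the constant
  control \<open>c\<close>; the control is called admissible for \<open>\<omega>\<close> when \<open>\<omega>\<^sup>2 + 4c > 0\<close>.\<close>
definition nu :: "real \<Rightarrow> real \<Rightarrow> real" where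
  "nu w c = sqrt (w\<^sup>2 + 4 * c)"

text \<open>\<open>Fl w c t x\<close>: the solution at time \<open>t\<close> of \<open>\<theta>' = w + (2/w)(1 - cos \<theta>) c\<close>, \<open>\<theta>(0) = x\<close>.\<close>
definition Fl :: "real \<Rightarrow> real \<Rightarrow> real \<Rightarrow> real \<Rightarrow> real" where
  "Fl w c t x = Gf (w / nu w c) (nu w c * t + Ginv (w / nu w c) x)"

lemma Fl_0: "w > 0 \<Longrightarrow> w\<^sup>2 + 4 * c > 0 \<Longrightarrow> Fl w c 0 x = x"
  unfolding Fl_def nu_def by (simp add: Gf_Ginv)

text \<open>The algebraic identity behind the flow equation: with \<open>r = w/\<nu>\<close>, the speed
  \<open>\<nu> G\<^sub>r'(a)\<close> equals the vector field \<open>w + (2/w)(1 - cos (G\<^sub>r a)) c\<close>.\<close>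
lemma Fl_speed_identity:
  assumes w: "w > 0" and n: "n > 0" and n2: "n\<^sup>2 = w\<^sup>2 + 4 * c"
  shows "2 * (w / n) / Qd (w / n) a * n = w + 2 / w * (1 - cos (Gf (w / n) a)) * c"
proof -
  define r where "r = w / n"
  have r: "r > 0" unfolding r_def using n w by simp
  have Q: "Qd r a > 0" using Qd_pos[OF r] .
  have "n\<^sup>2 * Qd r a + (1 - cos a) * (n\<^sup>2 - w\<^sup>2) = 2 * n\<^sup>2"
    unfolding Qd_def r_def using n by (simp add: field_simps power2_eq_square)
  then have key: "2 * w * n\<^sup>2 = w * (n\<^sup>2 * Qd r a) + 4 * w * (1 - cos a) * c"
    using n2 by (simp add: algebra_simps)
  have r2: "r\<^sup>2 = w\<^sup>2 / n\<^sup>2" unfolding r_def by (simp add: power_divide)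
  have "2 / w * (1 - cos (Gf r a)) * c = 2 / w * (2 * (w\<^sup>2 / n\<^sup>2) * (1 - cos a) / Qd r a) * c"
    unfolding cos_Gf[OF r] r2 ..
  also have "\<dots> = 4 * w * (1 - cos a) * c / (n\<^sup>2 * Qd r a)"
    using n w Q by (simp add: field_simps power2_eq_square)
  finally have "2 / w * (1 - cos (Gf r a)) * c = 4 * w * (1 - cos a) * c / (n\<^sup>2 * Qd r a)" .
  moreover have "2 * r / Qd r a * n = 2 * w / Qd r a" unfolding r_def using n by simp
  moreover have "2 * w / Qd r a = w + 4 * w * (1 - cos a) * c / (n\<^sup>2 * Qd r a)"
    using key n w Q by (simp add: field_simps)
  ultimately show ?thesis unfolding r_def by simp
qed

lemma Fl_deriv:
  assumes w: "w > 0" and c: "w\<^sup>2 + 4 * c > 0"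
  shows "((\<lambda>t. Fl w c t x) has_real_derivative (w + 2 / w * (1 - cos (Fl w c t x)) * c)) (at t)"
proof -
  define n where "n = nu w c"
  define a where "a = n * t + Ginv (w / n) x"
  have n: "n > 0" and n2: "n\<^sup>2 = w\<^sup>2 + 4 * c" unfolding n_def nu_def using c by simp_all
  have r: "w / n > 0" using n w by simp
  have inner: "((\<lambda>t. n * t + Ginv (w / n) x) has_real_derivative n) (at t)"
    by (auto intro!: derivative_eq_intros)
  have outer: "(Gf (w / n) has_real_derivative 2 * (w / n) / Qd (w / n) a)
      (at ((\<lambda>t. n * t + Ginv (w / n) x) t))"
    using Gf_deriv[OF r, of a] by (simp add: a_def)
  from DERIV_chain2[OF outer inner]
  have "((\<lambda>t. Gf (w / n) (n * t + Ginv (w / n) x)) has_real_derivative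
          2 * (w / n) / Qd (w / n) a * n) (at t)"
    unfolding a_def .
  then show ?thesis
    unfolding Fl_def n_def[symmetric] a_def[symmetric] Fl_speed_identity[OF w n n2] .
qed

lemma Fl_isCont: "w > 0 \<Longrightarrow> w\<^sup>2 + 4 * c > 0 \<Longrightarrow> isCont (\<lambda>t. Fl w c t x) t"
  using Fl_deriv DERIV_isCont by blast

lemma Fl_bound:
  assumes w: "w > 0" and c: "w\<^sup>2 + 4 * c > 0"
  shows "\<bar>Fl w c t x - x - nu w c * t\<bar> \<le> 2 * pi"
proof -
  have r: "w / nu w c > 0" unfolding nu_def using w c by simp
  show ?thesis
    using Gf_bound[of "w / nu w c" "nu w c * t + Ginv (w / nu w c) x"] Ginv_bound[OF r, of x]
    unfolding Fl_def by linarith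
qed

lemma Fl_cont:
  fixes f g :: "'a::topological_space \<Rightarrow> real"
  assumes w: "w > 0" and c: "w\<^sup>2 + 4 * c > 0"
    and f: "continuous_on UNIV f" and g: "continuous_on UNIV g"
  shows "continuous_on UNIV (\<lambda>y. Fl w c (f y) (g y))"
proof -
  have r: "w / nu w c > 0" unfolding nu_def using w c by simp
  have cG: "continuous_on UNIV (Gf (w / nu w c))"
    using Gf_isCont[OF r] by (simp add: continuous_on_eq_continuous_at)
  have cI: "continuous_on UNIV (Ginv (w / nu w c))"
    using Ginv_isCont[OF r] by (simp add: continuous_on_eq_continuous_at)
  have "continuous_on UNIV (\<lambda>y. nu w c * f y + Ginv (w / nu w c) (g y))"
    by (intro continuous_intros f continuous_on_compose2[OF cI g]) auto
  thus ?thesis unfolding Fl_def by (rule continuous_on_compose2[OF cG]) auto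
qed


subsection \<open>Concatenation of controls and trajectories\<close>

lemma concat_partition_gap:
  fixes S1 S2 :: "real set"
  assumes S1: "T1 \<in> S1" "S1 \<subseteq> {0..T1}" and S2: "0 \<in> S2" "S2 \<subseteq> {0..T2}"
    and a: "a \<in> S1 \<union> (\<lambda>s. s + T1) ` S2" and b: "b \<in> S1 \<union> (\<lambda>s. s + T1) ` S2"
    and gap: "a < b" "{a<..<b} \<inter> (S1 \<union> (\<lambda>s. s + T1) ` S2) = {}"
  shows "(a \<in> S1 \<and> b \<in> S1 \<and> {a<..<b} \<inter> S1 = {} \<and> b \<le> T1) \<or>
         (a - T1 \<in> S2 \<and> b - T1 \<in> S2 \<and> {a - T1<..<b - T1} \<inter> S2 = {} \<and> T1 \<le> a)"
proof -
  have "T1 \<notin> {a<..<b}" using gap S1(1) by blast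
  then consider "b \<le> T1" | "T1 \<le> a" by force
  then show ?thesis
  proof cases
    case 1
    have in_S1: "x \<in> S1" if x: "x \<in> S1 \<union> (\<lambda>s. s + T1) ` S2" "x \<le> T1" for x
    proof (cases "x \<in> S1")
      case False
      then obtain s where "s \<in> S2" "x = s + T1" using x by auto
      then have "x = T1" using x(2) S2(2) by force
      then show ?thesis using S1(1) by simp
    qed
    have "a \<in> S1" "b \<in> S1"
      using in_S1[OF a] in_S1[OF b] 1 gap(1) by auto
    then show ?thesis using 1 gap by auto
  next
    case 2
    have in_S2: "x - T1 \<in> S2" if x: "x \<in> S1 \<union> (\<lambda>s. s + T1) ` S2" "T1 \<le> x" for x
    proof (cases "x \<in> S1")
      case True
      then have "x = T1" using x(2) S1(2) by force
      then show ?thesis using S2(1) by simp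
    next
      case False
      then show ?thesis using x by auto
    qed
    have "a - T1 \<in> S2" "b - T1 \<in> S2"
      using in_S2[OF a] in_S2[OF b] 2 gap(1) by auto
    moreover have "{a - T1<..<b - T1} \<inter> S2 = {}"
    proof (rule ccontr)
      assume "{a - T1<..<b - T1} \<inter> S2 \<noteq> {}"
      then obtain s where "s \<in> S2" "a - T1 < s" "s < b - T1" by auto
      then have "s + T1 \<in> {a<..<b} \<inter> (S1 \<union> (\<lambda>s. s + T1) ` S2)" by auto
      then show False using gap by blast
    qed
    ultimately show ?thesis using 2 by blast
  qed
qed

lemma concat_adm:
  assumes a1: "admissible_control T1 u1" and a2: "admissible_control T2 u2"
  shows "admissible_control (T1 + T2) (\<lambda>t. if t \<le> T1 then u1 t else u2 (t - T1))"
proof -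
  obtain S1 where S1: "finite S1" "0 \<in> S1" "T1 \<in> S1" "S1 \<subseteq> {0..T1}"
    and P1: "\<forall>a\<in>S1. \<forall>b\<in>S1. a < b \<and> {a<..<b} \<inter> S1 = {} \<longrightarrow> (\<exists>c. \<forall>t\<in>{a<..<b}. u1 t = c)"
    using a1 unfolding admissible_control_def by blast
  obtain S2 where S2: "finite S2" "0 \<in> S2" "T2 \<in> S2" "S2 \<subseteq> {0..T2}"
    and P2: "\<forall>a\<in>S2. \<forall>b\<in>S2. a < b \<and> {a<..<b} \<inter> S2 = {} \<longrightarrow> (\<exists>c. \<forall>t\<in>{a<..<b}. u2 t = c)"
    using a2 unfolding admissible_control_def by blast
  define S where "S = S1 \<union> (\<lambda>s. s + T1) ` S2"
  let ?u = "\<lambda>t. if t \<le> T1 then u1 t else u2 (t - T1)"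
  have "T1 \<ge> 0" "T2 \<ge> 0" using S1 S2 by auto
  then have "finite S" "0 \<in> S" "S \<subseteq> {0..T1 + T2}"
    unfolding S_def using S1 S2 by auto
  moreover have "T1 + T2 \<in> S" unfolding S_def using S2 by force
  moreover have "\<forall>a\<in>S. \<forall>b\<in>S. a < b \<and> {a<..<b} \<inter> S = {} \<longrightarrow> (\<exists>c. \<forall>t\<in>{a<..<b}. ?u t = c)"
  proof (intro ballI impI, elim conjE)
    fix a b assume ab: "a \<in> S" "b \<in> S" "a < b" "{a<..<b} \<inter> S = {}"
    from concat_partition_gap[OF S1(3,4) S2(2,4) ab[unfolded S_def]]
    show "\<exists>c. \<forall>t\<in>{a<..<b}. ?u t = c"
    proof (elim disjE conjE)
      assume "a \<in> S1" "b \<in> S1" "{a<..<b} \<inter> S1 = {}" "b \<le> T1"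
      then obtain c where "\<forall>t\<in>{a<..<b}. u1 t = c" using P1 \<open>a < b\<close> by blast
      then show ?thesis using \<open>b \<le> T1\<close> by (intro exI[of _ c]) auto
    next
      assume "a - T1 \<in> S2" "b - T1 \<in> S2" "{a - T1<..<b - T1} \<inter> S2 = {}" "T1 \<le> a"
      then obtain c where "\<forall>t\<in>{a - T1<..<b - T1}. u2 t = c" using P2 \<open>a < b\<close> by force
      then show ?thesis using \<open>T1 \<le> a\<close> by (intro exI[of _ c]) auto
    qed
  qed
  ultimately show ?thesis unfolding admissible_control_def by blast
qed

lemma continuous_on_concat:
  fixes f g :: "real \<Rightarrow> real"
  assumes f: "continuous_on {0..T1} f" and g: "continuous_on {0..T2} g"
    and eq: "g 0 = f T1" and T1: "T1 \<ge> 0" and T2: "T2 \<ge> 0"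
  shows "continuous_on {0..T1 + T2} (\<lambda>t. if t \<le> T1 then f t else g (t - T1))"
proof -
  have U: "{0..T1 + T2} = {0..T1} \<union> {T1..T1 + T2}" using T1 T2 by auto
  have a: "continuous_on {0..T1} (\<lambda>t. if t \<le> T1 then f t else g (t - T1))"
    using f by (rule continuous_on_eq) auto
  have "continuous_on {T1..T1 + T2} (\<lambda>t. g (t - T1))"
    by (rule continuous_on_compose2[OF g]) (auto intro!: continuous_intros)
  then have b: "continuous_on {T1..T1 + T2} (\<lambda>t. if t \<le> T1 then f t else g (t - T1))"
    by (rule continuous_on_eq) (use eq in auto)
  show ?thesis unfolding U by (rule continuous_on_closed_Un[OF _ _ a b]) auto
qed

lemma concat_has_derivative:
  fixes f g :: "real \<Rightarrow> real"
  assumes "t \<noteq> T1"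
    and "t < T1 \<Longrightarrow> (f has_real_derivative D) (at t)"
    and "T1 < t \<Longrightarrow> (g has_real_derivative D) (at (t - T1))"
  shows "((\<lambda>s. if s \<le> T1 then f s else g (s - T1)) has_real_derivative D) (at t)"
proof (cases "t < T1")
  case True
  show ?thesis
    by (rule has_field_derivative_transform_within_open[OF assms(2)[OF True], where S = "{..<T1}"])
       (use True in auto)
next
  case False
  then have tT: "T1 < t" using assms(1) by simp
  have "(g has_real_derivative D) (at (t + (- T1)))" using assms(3)[OF tT] by simp
  then have "((\<lambda>s. g (s + (- T1))) has_real_derivative D) (at t)" unfolding DERIV_shift .
  then show ?thesis
    by (rule has_field_derivative_transform_within_open[where S = "{T1<..}"]) (use tT in auto)
qed

lemma concat_traj:
  assumes t1: "sniper_trajectory \<omega> z u1 T1 \<theta>1" and t2: "sniper_trajectory \<omega> z u2 T2 \<theta>2"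
    and eq: "\<theta>2 0 = \<theta>1 T1" and T1: "T1 \<ge> 0" and T2: "T2 \<ge> 0"
  shows "sniper_trajectory \<omega> z (\<lambda>t. if t \<le> T1 then u1 t else u2 (t - T1)) (T1 + T2)
           (\<lambda>t i. if t \<le> T1 then \<theta>1 t i else \<theta>2 (t - T1) i)"
proof -
  obtain S1 where S1: "finite S1" and D1: "\<forall>t\<in>{0<..<T1} - S1. \<forall>i.
        ((\<lambda>s. \<theta>1 s i) has_real_derivative (\<omega> i + z i * (1 - cos (\<theta>1 t i)) * u1 t)) (at t)"
    using t1 unfolding sniper_trajectory_def by blast
  obtain S2 where S2: "finite S2" and D2: "\<forall>t\<in>{0<..<T2} - S2. \<forall>i.
        ((\<lambda>s. \<theta>2 s i) has_real_derivative (\<omega> i + z i * (1 - cos (\<theta>2 t i)) * u2 t)) (at t)"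
    using t2 unfolding sniper_trajectory_def by blast
  let ?th = "\<lambda>t i. if t \<le> T1 then \<theta>1 t i else \<theta>2 (t - T1) i"
  let ?u = "\<lambda>t. if t \<le> T1 then u1 t else u2 (t - T1)"
  define S where "S = S1 \<union> {T1} \<union> (\<lambda>s. s + T1) ` S2"
  have "\<forall>i. continuous_on {0..T1 + T2} (\<lambda>t. ?th t i)"
    using continuous_on_concat[of T1 "\<lambda>t. \<theta>1 t i" T2 "\<lambda>t. \<theta>2 t i" for i] t1 t2 eq T1 T2
    unfolding sniper_trajectory_def by simp
  moreover have "finite S" unfolding S_def using S1 S2 by auto
  moreover have "\<forall>t\<in>{0<..<T1 + T2} - S. \<forall>i.
      ((\<lambda>s. ?th s i) has_real_derivative (\<omega> i + z i * (1 - cos (?th t i)) * ?u t)) (at t)"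
  proof (intro ballI allI)
    fix t i assume t: "t \<in> {0<..<T1 + T2} - S"
    show "((\<lambda>s. ?th s i) has_real_derivative (\<omega> i + z i * (1 - cos (?th t i)) * ?u t)) (at t)"
    proof (rule concat_has_derivative[where f = "\<lambda>s. \<theta>1 s i" and g = "\<lambda>s. \<theta>2 s i"])
      show "t \<noteq> T1" using t unfolding S_def by auto
    next
      assume "t < T1"
      then have "t \<in> {0<..<T1} - S1" using t unfolding S_def by auto
      then show "((\<lambda>s. \<theta>1 s i) has_real_derivative
          (\<omega> i + z i * (1 - cos (?th t i)) * ?u t)) (at t)"
        using D1 \<open>t < T1\<close> by simp
    next
      assume "T1 < t"
      have "t - T1 \<notin> S2"
      proof
        assume "t - T1 \<in> S2"
        then have "t \<in> (\<lambda>s. s + T1) ` S2" by (rule rev_image_eqI) simp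
        then show False using t unfolding S_def by blast
      qed
      then have "t - T1 \<in> {0<..<T2} - S2" using t \<open>T1 < t\<close> by auto
      then show "((\<lambda>s. \<theta>2 s i) has_real_derivative
          (\<omega> i + z i * (1 - cos (?th t i)) * ?u t)) (at (t - T1))"
        using D2 \<open>T1 < t\<close> by simp
    qed
  qed
  ultimately show ?thesis unfolding sniper_trajectory_def by blast
qed

subsection \<open>Piecewise constant controls\<close>

definition admissible_value :: "('n \<Rightarrow> real) \<Rightarrow> real \<Rightarrow> bool" where
  "admissible_value \<omega> c \<longleftrightarrow> (\<forall>i. (\<omega> i)\<^sup>2 + 4 * c > 0)"

fun flowall :: "('n \<Rightarrow> real) \<Rightarrow> (real \<times> real) list \<Rightarrow> ('n \<Rightarrow> real) \<Rightarrow> ('n \<Rightarrow> real)" where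
  "flowall w [] x = x"
| "flowall w (ct # s) x = flowall w s (\<lambda>i. Fl (w i) (fst ct) (snd ct) (x i))"

lemma const_segment:
  assumes pos: "\<forall>i. \<omega> i > 0" and zz: "\<forall>i. z i = 2 / \<omega> i"
    and cc: "admissible_value \<omega> c" and tau: "\<tau> \<ge> 0"
  shows "admissible_control \<tau> (\<lambda>_. c)"
    and "sniper_trajectory \<omega> z (\<lambda>_. c) \<tau> (\<lambda>t i. Fl (\<omega> i) c t (x i))"
proof -
  show "admissible_control \<tau> (\<lambda>_. c)"
    unfolding admissible_control_def using tau by (intro exI[of _ "{0, \<tau>}"]) auto
  have "continuous_on {0..\<tau>} (\<lambda>t. Fl (\<omega> i) c t (x i))" for i
    using Fl_isCont pos cc by (simp add: continuous_at_imp_continuous_on admissible_value_def)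
  moreover have "((\<lambda>s. Fl (\<omega> i) c s (x i)) has_real_derivative
           (\<omega> i + z i * (1 - cos (Fl (\<omega> i) c t (x i))) * c)) (at t)" for t i
    using Fl_deriv[of "\<omega> i" c "x i" t] pos cc zz by (simp add: admissible_value_def)
  ultimately show "sniper_trajectory \<omega> z (\<lambda>_. c) \<tau> (\<lambda>t i. Fl (\<omega> i) c t (x i))"
    unfolding sniper_trajectory_def by (intro conjI exI[of _ "{}"]) auto
qed

lemma piecewise_constant_traj:
  assumes pos: "\<forall>i. \<omega> i > 0" and zz: "\<forall>i. z i = 2 / \<omega> i"
    and segs: "\<forall>p\<in>set segs. snd p \<ge> 0 \<and> admissible_value \<omega> (fst p)"
  shows "\<exists>u \<theta>. admissible_control (sum_list (map snd segs)) u \<and>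
           sniper_trajectory \<omega> z u (sum_list (map snd segs)) \<theta> \<and>
           \<theta> 0 = x \<and> \<theta> (sum_list (map snd segs)) = flowall \<omega> segs x"
  using segs
proof (induction segs arbitrary: x)
  case Nil
  have "admissible_control 0 (\<lambda>_. 0)"
    unfolding admissible_control_def by (intro exI[of _ "{0}"]) auto
  moreover have "sniper_trajectory \<omega> z (\<lambda>_. 0) 0 (\<lambda>_. x)"
    unfolding sniper_trajectory_def by (intro conjI allI exI[of _ "{}"]) auto
  ultimately show ?case by (intro exI[of _ "\<lambda>_. 0"] exI[of _ "\<lambda>_. x"]) simp
next
  case (Cons p segs)
  obtain c \<tau> where p: "p = (c, \<tau>)" by force
  have tau: "\<tau> \<ge> 0" and cc: "admissible_value \<omega> c" using Cons.prems p by auto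
  define y where "y = (\<lambda>i. Fl (\<omega> i) c \<tau> (x i))"
  define T2 where "T2 = sum_list (map snd segs)"
  obtain u2 \<theta>2 where h2: "admissible_control T2 u2" "sniper_trajectory \<omega> z u2 T2 \<theta>2"
     "\<theta>2 0 = y" "\<theta>2 T2 = flowall \<omega> segs y"
    using Cons.IH[of y] Cons.prems unfolding T2_def by auto
  have T2: "T2 \<ge> 0" using Cons.prems unfolding T2_def by (auto intro!: sum_list_nonneg)
  let ?u = "\<lambda>t. if t \<le> \<tau> then c else u2 (t - \<tau>)"
  let ?th = "\<lambda>t i. if t \<le> \<tau> then Fl (\<omega> i) c t (x i) else \<theta>2 (t - \<tau>) i"
  have A: "admissible_control (\<tau> + T2) ?u"
    using concat_adm[OF const_segment(1)[OF pos zz cc tau] h2(1)] .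
  have B: "sniper_trajectory \<omega> z ?u (\<tau> + T2) ?th"
    by (rule concat_traj[OF const_segment(2)[OF pos zz cc tau] h2(2) _ tau T2])
       (simp add: h2(3) y_def)
  have C: "?th 0 = x"
    using tau Fl_0 pos cc by (simp add: admissible_value_def)
  have "?th (\<tau> + T2) = \<theta>2 T2"
  proof (cases "T2 = 0")
    case True
    then show ?thesis using h2(3) by (simp add: y_def)
  qed (use T2 in simp)
  then have D: "?th (\<tau> + T2) = flowall \<omega> (p # segs) x"
    using h2(4) p by (simp add: y_def)
  have len: "sum_list (map snd (p # segs)) = \<tau> + T2" unfolding p T2_def by simp
  show ?case unfolding len by (intro exI[of _ ?u] exI[of _ ?th] conjI A B C D)
qed

lemma flowall_bound:
  assumes pos: "\<forall>i. \<omega> i > 0" and segs: "\<forall>p\<in>set segs. admissible_value \<omega> (fst p)"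
  shows "\<bar>flowall \<omega> segs x i - x i - (\<Sum>p\<leftarrow>segs. nu (\<omega> i) (fst p) * snd p)\<bar>
           \<le> 2 * pi * length segs"
  using segs
proof (induction segs arbitrary: x)
  case Nil then show ?case by simp
next
  case (Cons p segs)
  define y where "y = (\<lambda>i. Fl (\<omega> i) (fst p) (snd p) (x i))"
  have "\<bar>flowall \<omega> segs y i - y i - (\<Sum>p\<leftarrow>segs. nu (\<omega> i) (fst p) * snd p)\<bar> \<le> 2 * pi * length segs"
    using Cons by auto
  moreover have "\<bar>y i - x i - nu (\<omega> i) (fst p) * snd p\<bar> \<le> 2 * pi"
    unfolding y_def using Fl_bound pos Cons.prems by (auto simp: admissible_value_def)
  ultimately show ?case unfolding y_def by (simp add: algebra_simps)
qed

lemma flowall_cont: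
  fixes dur :: "'b \<Rightarrow> 'a::topological_space \<Rightarrow> real"
  assumes pos: "\<forall>i. \<omega> i > 0"
    and ctrl: "\<forall>b\<in>set bl. admissible_value \<omega> (ctrl b)"
    and dur: "\<forall>b. continuous_on UNIV (dur b)"
    and x: "\<forall>i. continuous_on UNIV (\<lambda>y. x y i)"
  shows "continuous_on UNIV (\<lambda>y. flowall \<omega> (map (\<lambda>b. (ctrl b, dur b y)) bl) (x y) i)"
  using ctrl x
proof (induction bl arbitrary: x i)
  case Nil then show ?case by simp
next
  case (Cons b bl)
  have "\<forall>i. continuous_on UNIV (\<lambda>y. Fl (\<omega> i) (ctrl b) (dur b y) (x y i))"
  proof
    fix i show "continuous_on UNIV (\<lambda>y. Fl (\<omega> i) (ctrl b) (dur b y) (x y i))"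
      by (rule Fl_cont) (use pos Cons.prems dur in \<open>auto simp: admissible_value_def\<close>)
  qed
  then show ?case using Cons.IH[of "\<lambda>y i. Fl (\<omega> i) (ctrl b) (dur b y) (x y i)"] Cons.prems by simp
qed

subsection \<open>The speed vectors span \<open>\<real>\<^sup>n\<close>\<close>

text \<open>A generalized power sum with pairwise distinct positive bases vanishes identically only
  if all its coefficients vanish: divide by the largest base and let the exponent tend to
  infinity.\<close>
lemma power_sums_zero:
  fixes \<mu> \<beta> :: "'n::finite \<Rightarrow> real"
  assumes inj: "inj \<beta>" and pos: "\<forall>j. \<beta> j > 0" and z: "\<forall>k::nat. (\<Sum>j\<in>UNIV. \<mu> j * \<beta> j ^ k) = 0"
  shows "\<mu> j0 = 0"
proof (rule ccontr)
  assume nz: "\<mu> j0 \<noteq> 0"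
  define S where "S = {j. \<mu> j \<noteq> 0}"
  have S: "finite S" "S \<noteq> {}" using nz unfolding S_def by auto
  have "Max (\<beta> ` S) \<in> \<beta> ` S" using S by simp
  then obtain jm where jm: "jm \<in> S" "\<beta> jm = Max (\<beta> ` S)" by force
  have le: "\<forall>j\<in>S. \<beta> j \<le> \<beta> jm" using jm S by simp
  have bm: "\<beta> jm > 0" using pos by auto
  have sumS: "(\<Sum>j\<in>S. \<mu> j * (\<beta> j / \<beta> jm) ^ k) = 0" for k
  proof -
    have "(\<Sum>j\<in>UNIV. \<mu> j * \<beta> j ^ k) = (\<Sum>j\<in>S. \<mu> j * \<beta> j ^ k)"
      by (rule sum.mono_neutral_right) (auto simp: S_def)
    then have "(\<Sum>j\<in>S. \<mu> j * \<beta> j ^ k) / \<beta> jm ^ k = 0" using z by simp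
    then show ?thesis by (simp add: sum_divide_distrib power_divide)
  qed
  have "(\<lambda>k. \<Sum>j\<in>S. \<mu> j * (\<beta> j / \<beta> jm) ^ k) \<longlonglongrightarrow> (\<Sum>j\<in>S. if j = jm then \<mu> j else 0)"
  proof (rule tendsto_sum)
    fix j assume j: "j \<in> S"
    show "(\<lambda>k. \<mu> j * (\<beta> j / \<beta> jm) ^ k) \<longlonglongrightarrow> (if j = jm then \<mu> j else 0)"
    proof (cases "j = jm")
      case True then show ?thesis using bm by simp
    next
      case False
      then have "\<beta> j \<noteq> \<beta> jm" using inj unfolding inj_def by blast
      then have "\<beta> j < \<beta> jm" using le j by force
      moreover have "0 < \<beta> j / \<beta> jm" using pos bm by simp
      ultimately have "norm (\<beta> j / \<beta> jm) < 1" using bm pos[rule_format, of j] by simp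
      then have "(\<lambda>k. (\<beta> j / \<beta> jm) ^ k) \<longlonglongrightarrow> 0" by (rule LIMSEQ_power_zero)
      then show ?thesis using False by (simp add: tendsto_mult_right_zero)
    qed
  qed
  moreover have "(\<Sum>j\<in>S. if j = jm then \<mu> j else 0) = \<mu> jm" using jm S by simp
  ultimately have "(\<lambda>k. 0) \<longlonglongrightarrow> \<mu> jm" using sumS by simp
  then have "\<mu> jm = 0" using LIMSEQ_unique tendsto_const by blast
  then show False using jm unfolding S_def by simp
qed

definition speed_vector :: "('n::finite \<Rightarrow> real) \<Rightarrow> real \<Rightarrow> real^'n" where
  "speed_vector \<omega> c = (\<chi> j. nu (\<omega> j) c)"

text \<open>If \<open>\<Sum> a\<^sub>j (b\<^sub>j + 4c)\<^sup>1\<^sup>/\<^sup>2\<close> vanishes on the half-line \<open>c > m\<close>, so do all its derivatives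
  in \<open>c\<close>, which are multiples of \<open>\<Sum> a\<^sub>j (b\<^sub>j + 4c)\<^sup>1\<^sup>/\<^sup>2\<^sup>-\<^sup>k\<close>; the multiples \<open>1/2 - k\<close> never vanish.\<close>
lemma root_sum_derivatives:
  fixes a b :: "'n::finite \<Rightarrow> real"
  assumes pos: "\<And>j c. c > m \<Longrightarrow> b j + 4 * c > 0"
    and zero: "\<And>c. c > m \<Longrightarrow> (\<Sum>j\<in>UNIV. a j * (b j + 4 * c) powr (1/2)) = 0"
  shows "\<forall>c>m. (\<Sum>j\<in>UNIV. a j * (b j + 4 * c) powr (1/2 - real k)) = 0"
proof (induction k)
  case 0
  then show ?case using zero by simp
next
  case (Suc k)
  show ?case
  proof (intro allI impI)
    fix c assume c: "c > m"
    let ?f = "\<lambda>c. \<Sum>j\<in>UNIV. a j * (b j + 4 * c) powr (1/2 - real k)"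
    let ?g = "\<lambda>c. \<Sum>j\<in>UNIV. a j * (b j + 4 * c) powr (1/2 - real k - 1)"
    have "(?f has_real_derivative (4 * (1/2 - real k)) * ?g c) (at c)"
    proof -
      have "((\<lambda>c. a j * (b j + 4 * c) powr (1/2 - real k)) has_real_derivative
           a j * ((1/2 - real k) * (b j + 4 * c) powr (1/2 - real k - 1) * 4)) (at c)" for j
        using pos[OF c, of j] by (auto intro!: derivative_eq_intros)
      then have "(?f has_real_derivative
          (\<Sum>j\<in>UNIV. a j * ((1/2 - real k) * (b j + 4 * c) powr (1/2 - real k - 1) * 4))) (at c)"
        by (rule DERIV_sum)
      then show ?thesis by (simp add: sum_distrib_left algebra_simps)
    qed
    moreover have "(?f has_real_derivative 0) (at c)"
      by (rule has_field_derivative_transform_within_open[where S="{m<..}" and f="\<lambda>_. 0"])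
         (use c Suc in auto)
    ultimately have "(4 * (1/2 - real k)) * ?g c = 0" by (rule DERIV_unique)
    moreover have "4 * (1/2 - real k) \<noteq> 0"
    proof -
      have "2 * k \<noteq> (1::nat)" by presburger
      then have "real (2 * k) \<noteq> 1" by (metis of_nat_1 of_nat_eq_iff)
      then show ?thesis by simp
    qed
    ultimately show "(\<Sum>j\<in>UNIV. a j * (b j + 4 * c) powr (1/2 - real (Suc k))) = 0"
      by (simp add: algebra_simps)
  qed
qed

text \<open>A vector \<open>a\<close> orthogonal to all
  of them gives \<open>\<Sum> a\<^sub>j (\<omega>\<^sub>j\<^sup>2 + 4c)\<^sup>1\<^sup>/\<^sup>2 = 0\<close> on a half-line, hence by
  the previous lemma a vanishing power sum in the distinct bases \<open>1/(\<omega>\<^sub>j\<^sup>2 + 4c)\<close>.\<close>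
lemma speed_vectors_span:
  fixes \<omega> :: "'n::finite \<Rightarrow> real"
  assumes inj: "inj \<omega>" and pos: "\<forall>i. \<omega> i > 0"
  shows "span (speed_vector \<omega> ` {c. admissible_value \<omega> c}) = UNIV"
proof (rule ccontr)
  let ?V = "speed_vector \<omega> ` {c. admissible_value \<omega> c}"
  assume "span ?V \<noteq> UNIV"
  then obtain a :: "real^'n" where a: "a \<noteq> 0" "span ?V \<subseteq> {x. a \<bullet> x = 0}"
    by (metis span_not_univ_subset_hyperplane)
  define m where "m = Max (range (\<lambda>j. - (\<omega> j)\<^sup>2 / 4))"
  have Cm: "(\<omega> j)\<^sup>2 + 4 * c > 0" if "c > m" for c j
  proof -
    have "- (\<omega> j)\<^sup>2 / 4 \<le> m" unfolding m_def by (rule Max_ge) auto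
    then show ?thesis using that by linarith
  qed
  have "(\<Sum>j\<in>UNIV. a$j * ((\<omega> j)\<^sup>2 + 4 * c) powr (1/2)) = 0" if c: "c > m" for c
  proof -
    have "speed_vector \<omega> c \<in> span ?V"
      using Cm[OF c] by (intro span_base) (auto simp: admissible_value_def)
    then have "a \<bullet> speed_vector \<omega> c = 0" using a by auto
    then show ?thesis
      unfolding inner_vec_def speed_vector_def nu_def using Cm[OF c]
      by (simp add: powr_half_sqrt less_imp_le)
  qed
  from root_sum_derivatives[of m "\<lambda>j. (\<omega> j)\<^sup>2" "\<lambda>j. a$j", OF Cm this]
  have zk: "\<forall>c>m. (\<Sum>j\<in>UNIV. a$j * ((\<omega> j)\<^sup>2 + 4 * c) powr (1/2 - real k)) = 0" for k .
  define X where "X j = (\<omega> j)\<^sup>2 + 4 * (m + 1)" for j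
  have Xp: "X j > 0" for j unfolding X_def using Cm[of "m+1"] by simp
  have ps: "(\<Sum>j\<in>UNIV. (a$j * sqrt (X j)) * (1 / X j) ^ k) = 0" for k
  proof -
    have "(X j) powr (1/2 - real k) = sqrt (X j) * (1 / X j) ^ k" for j
      using Xp[of j] by (simp add: powr_diff powr_realpow powr_half_sqrt less_imp_le power_one_over)
    then show ?thesis
      using zk[of k, rule_format, of "m+1"] unfolding X_def[symmetric] by (simp add: mult.assoc)
  qed
  have injX: "inj (\<lambda>j. 1 / X j)"
  proof (rule injI)
    fix i j assume "1 / X i = 1 / X j"
    then have "(\<omega> i)\<^sup>2 = (\<omega> j)\<^sup>2" unfolding X_def by simp
    then have "\<omega> i = \<omega> j" using pos by (metis less_imp_le power2_eq_iff_nonneg)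
    then show "i = j" using inj by (auto dest: injD)
  qed
  have "a$j * sqrt (X j) = 0" for j
    by (rule power_sums_zero[OF injX]) (use Xp ps in auto)
  then have "a$j = 0" for j using Xp[of j] by (metis mult_eq_0_iff real_sqrt_gt_0_iff less_irrefl)
  then have "a = 0" by (simp add: vec_eq_iff)
  then show False using a by simp
qed

lemma spanning_controls:
  fixes \<omega> :: "'n::finite \<Rightarrow> real"
  assumes inj: "inj \<omega>" and pos: "\<forall>i. \<omega> i > 0"
  obtains cs where "\<forall>c\<in>set cs. admissible_value \<omega> c" and "distinct cs"
    and "inj_on (speed_vector \<omega>) (set cs)" and "span (speed_vector \<omega> ` set cs) = UNIV"
proof -
  let ?V = "speed_vector \<omega> ` {c. admissible_value \<omega> c}"
  obtain B where B: "B \<subseteq> ?V" "independent B" "?V \<subseteq> span B" by (rule basis_exists)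
  obtain U where U: "U \<subseteq> {c. admissible_value \<omega> c}" "inj_on (speed_vector \<omega>) U"
      "B = speed_vector \<omega> ` U"
    using B(1) subset_image_inj by metis
  have "finite U" using finiteI_independent[OF B(2)] U(2,3) finite_imageD by blast
  then obtain cs where cs: "set cs = U" "distinct cs" using finite_distinct_list by blast
  have "span ?V \<subseteq> span B" by (rule span_minimal[OF B(3) subspace_span])
  then have "span B = UNIV" using speed_vectors_span[OF inj pos] by auto
  then show ?thesis using that cs U by auto
qed

subsection \<open>Choosing the durations\<close>

lemma linear_coordinates:
  fixes B :: "(real^'n) set"
  assumes fin: "finite B" and sp: "span B = UNIV"
  obtains \<alpha> :: "'n \<Rightarrow> real^'n \<Rightarrow> real" where "\<And>y. (\<Sum>v\<in>B. (\<Sum>i\<in>UNIV. y$i * \<alpha> i v) *\<^sub>R v) = y"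
proof -
  have "\<forall>i. \<exists>u. (\<Sum>v\<in>B. u v *\<^sub>R v) = axis i 1"
    using span_finite[OF fin] sp by (metis (no_types, lifting) UNIV_I rangeE)
  then obtain \<alpha> where \<alpha>: "\<And>i. (\<Sum>v\<in>B. \<alpha> i v *\<^sub>R v) = axis i 1" by metis
  have "(\<Sum>v\<in>B. (\<Sum>i\<in>UNIV. y$i * \<alpha> i v) *\<^sub>R v) = y" for y
  proof (subst vec_eq_iff, intro allI)
    fix j
    have "(\<Sum>v\<in>B. (\<Sum>i\<in>UNIV. y$i * \<alpha> i v) *\<^sub>R v) $ j = (\<Sum>i\<in>UNIV. y$i * (\<Sum>v\<in>B. \<alpha> i v * v$j))"
      by (simp add: sum_distrib_right sum_distrib_left sum.swap[of _ B] mult.assoc)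
    also have "\<dots> = (\<Sum>i\<in>UNIV. y$i * (axis i 1 $ j))"
      using arg_cong[OF \<alpha>, of "\<lambda>x. x $ j"] by simp
    also have "\<dots> = y$j" by (simp add: axis_def if_distrib cong: if_cong)
    finally show "(\<Sum>v\<in>B. (\<Sum>i\<in>UNIV. y$i * \<alpha> i v) *\<^sub>R v) $ j = y $ j" .
  qed
  then show ?thesis using that by blast
qed

text \<open>Every vector can be written as a combination of a finite spanning set with coefficients
  depending continuously on the vector, and these coefficients are nonnegative on a whole box
  of prescribed radius \<open>\<rho>\<close> around a suitable centre \<open>p\<close> (take \<open>p\<close> a large multiple of
  \<open>\<Sum>\<^sub>v v\<close>).\<close>
lemma spanning_set_positive_coefficients:
  fixes B :: "(real^'n) set"
  assumes fin: "finite B" and sp: "span B = UNIV"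
  obtains \<tau> :: "real^'n \<Rightarrow> real^'n \<Rightarrow> real" and p :: "real^'n"
  where "\<And>v. continuous_on UNIV (\<tau> v)" and "\<And>y. (\<Sum>v\<in>B. \<tau> v y *\<^sub>R v) = y"
    and "\<And>y v. \<forall>i. \<bar>y$i - p$i\<bar> \<le> \<rho> \<Longrightarrow> v \<in> B \<Longrightarrow> \<tau> v y \<ge> 0"
proof -
  obtain \<alpha> where \<alpha>: "\<And>y. (\<Sum>v\<in>B. (\<Sum>i\<in>UNIV. y$i * \<alpha> i v) *\<^sub>R v) = y"
    using linear_coordinates[OF fin sp] by blast
  define coef where "coef v y = (\<Sum>i\<in>UNIV. y$i * \<alpha> i v)" for v y
  define A where "A = (\<Sum>v\<in>B. \<Sum>i\<in>UNIV. \<bar>\<alpha> i v\<bar>)"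
  define R where "R = \<bar>\<rho>\<bar> * A + 1"
  define p where "p = R *\<^sub>R (\<Sum>v\<in>B. v)"
  define \<tau> where "\<tau> v y = R + coef v (y - p)" for v y
  have "continuous_on UNIV (\<tau> v)" for v
    unfolding \<tau>_def coef_def by (auto intro!: continuous_intros)
  moreover have "(\<Sum>v\<in>B. \<tau> v y *\<^sub>R v) = y" for y
  proof -
    have "(\<Sum>v\<in>B. \<tau> v y *\<^sub>R v) = (\<Sum>v\<in>B. R *\<^sub>R v) + (\<Sum>v\<in>B. coef v (y - p) *\<^sub>R v)"
      unfolding \<tau>_def by (simp add: scaleR_add_left sum.distrib)
    also have "\<dots> = p + (y - p)"
      unfolding coef_def \<alpha> p_def by (simp add: scaleR_sum_right)
    finally show ?thesis by simp
  qed
  moreover have "\<tau> v y \<ge> 0" if y: "\<forall>i. \<bar>y$i - p$i\<bar> \<le> \<rho>" and v: "v \<in> B" for y v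
  proof -
    have "\<bar>coef v (y - p)\<bar> \<le> (\<Sum>i\<in>UNIV. \<bar>(y - p)$i * \<alpha> i v\<bar>)"
      unfolding coef_def by (rule sum_abs)
    also have "\<dots> \<le> (\<Sum>i\<in>UNIV. \<bar>\<rho>\<bar> * \<bar>\<alpha> i v\<bar>)"
    proof (rule sum_mono)
      fix i
      have "\<bar>(y - p)$i\<bar> \<le> \<bar>\<rho>\<bar>" using y[rule_format, of i] by simp
      then show "\<bar>(y - p)$i * \<alpha> i v\<bar> \<le> \<bar>\<rho>\<bar> * \<bar>\<alpha> i v\<bar>"
        by (simp add: abs_mult mult_right_mono)
    qed
    also have "\<dots> = \<bar>\<rho>\<bar> * (\<Sum>i\<in>UNIV. \<bar>\<alpha> i v\<bar>)" by (simp add: sum_distrib_left)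
    also have "\<dots> \<le> \<bar>\<rho>\<bar> * A"
      unfolding A_def
      by (intro mult_left_mono member_le_sum[OF v _ fin]) (auto intro: sum_nonneg)
    finally show ?thesis unfolding \<tau>_def R_def by linarith
  qed
  ultimately show ?thesis using that by blast
qed

lemma controlled_displacement:
  fixes \<omega> :: "'n::finite \<Rightarrow> real"
  assumes inj: "inj \<omega>" and pos: "\<forall>i. \<omega> i > 0"
  obtains cs :: "real list" and \<tau> :: "real \<Rightarrow> real^'n \<Rightarrow> real" and p :: "real^'n"
  where "\<forall>c\<in>set cs. admissible_value \<omega> c" and "\<forall>c. continuous_on UNIV (\<tau> c)"
    and "\<And>x y i. \<bar>flowall \<omega> (map (\<lambda>c. (c, \<tau> c y)) cs) x i - x i - y$i\<bar> \<le> 2 * pi * length cs"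
    and "\<And>y. \<forall>i. \<bar>y$i - p$i\<bar> \<le> 2 * pi * length cs + 2 * pi \<Longrightarrow> \<forall>c\<in>set cs. \<tau> c y \<ge> 0"
proof -
  obtain cs where adm: "\<forall>c\<in>set cs. admissible_value \<omega> c" and dist: "distinct cs"
    and inj_sv: "inj_on (speed_vector \<omega>) (set cs)"
    and sp: "span (speed_vector \<omega> ` set cs) = UNIV"
    using spanning_controls[OF inj pos] by blast
  obtain \<tau>v p where cont: "\<And>v. continuous_on UNIV (\<tau>v v)"
    and sum: "\<And>y. (\<Sum>v\<in>speed_vector \<omega> ` set cs. \<tau>v v y *\<^sub>R v) = y"
    and nonneg: "\<And>y v. \<forall>i. \<bar>y$i - p$i\<bar> \<le> 2 * pi * length cs + 2 * pi \<Longrightarrow>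
        v \<in> speed_vector \<omega> ` set cs \<Longrightarrow> \<tau>v v y \<ge> 0"
    using spanning_set_positive_coefficients[OF finite_imageI[OF finite_set] sp] by blast
  define \<tau> where "\<tau> c = \<tau>v (speed_vector \<omega> c)" for c
  have "\<bar>flowall \<omega> (map (\<lambda>c. (c, \<tau> c y)) cs) x i - x i - y$i\<bar> \<le> 2 * pi * length cs" for x y i
  proof -
    have "(\<Sum>p\<leftarrow>map (\<lambda>c. (c, \<tau> c y)) cs. nu (\<omega> i) (fst p) * snd p)
        = (\<Sum>c\<in>set cs. \<tau> c y * speed_vector \<omega> c $ i)"
      using dist by (simp add: comp_def sum_list_distinct_conv_sum_set speed_vector_def mult.commute)
    also have "\<dots> = (\<Sum>v\<in>speed_vector \<omega> ` set cs. \<tau>v v y *\<^sub>R v) $ i"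
      unfolding \<tau>_def sum.reindex[OF inj_sv] by simp
    also have "\<dots> = y$i" using sum by simp
    finally show ?thesis using flowall_bound[OF pos, of "map (\<lambda>c. (c, \<tau> c y)) cs" x i] adm by simp
  qed
  moreover have "\<forall>c\<in>set cs. \<tau> c y \<ge> 0" if "\<forall>i. \<bar>y$i - p$i\<bar> \<le> 2 * pi * length cs + 2 * pi" for y
    using nonneg[OF that] unfolding \<tau>_def by blast
  moreover have "\<forall>c. continuous_on UNIV (\<tau> c)" unfolding \<tau>_def using cont by blast
  ultimately show ?thesis using that[OF adm] by blast
qed

subsection \<open>Reaching every target\<close>

text \<open>A continuous self-map of \<open>\<real>\<^sup>n\<close> that moves every point by at most \<open>M\<close> in each coordinate
  attains every value \<open>t\<close>, at a point within \<open>M\<close> of \<open>t\<close>: apply Brouwer's fixed point theorem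
  to \<open>y \<mapsto> y + t - f y\<close> on the box of radius \<open>M\<close> around \<open>t\<close>.\<close>
lemma bounded_perturbation_surj:
  fixes f :: "real^'n \<Rightarrow> real^'n"
  assumes cont: "continuous_on UNIV f" and near: "\<And>y i. \<bar>f y $ i - y $ i\<bar> \<le> M"
  shows "\<exists>y. f y = t \<and> (\<forall>i. \<bar>y$i - t$i\<bar> \<le> M)"
proof -
  define K where "K = cbox (\<chi> i. t$i - M) (\<chi> i. t$i + M)"
  define g where "g y = y + (t - f y)" for y
  have "0 \<le> M" using near[of t] by (meson abs_ge_zero order_trans)
  then have "t \<in> K" unfolding K_def mem_box_cart by simp
  moreover have "continuous_on K g"
    unfolding g_def by (intro continuous_intros continuous_on_subset[OF cont]) auto
  moreover have "g \<in> K \<rightarrow> K"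
  proof -
    have "t$i - M \<le> g y $ i \<and> g y $ i \<le> t$i + M" for y i
      using near[of y i] unfolding g_def by (simp add: abs_le_iff)
    then show ?thesis unfolding K_def by (simp add: Pi_iff mem_box_cart)
  qed
  ultimately obtain y where y: "y \<in> K" "g y = y"
    using brouwer[OF compact_cbox convex_box(1), of _ _ g] unfolding K_def by blast
  then have "f y = t" by (simp add: g_def)
  moreover have "\<bar>y$i - t$i\<bar> \<le> M" for i
    using y(1)[unfolded K_def mem_box_cart, THEN spec[of _ i]] by (simp add: abs_le_iff)
  ultimately show ?thesis by blast
qed

lemma shift_into_box:
  fixes d q :: "'n \<Rightarrow> real"
  shows "\<exists>m::'n \<Rightarrow> int. \<forall>i. \<bar>d i + 2 * pi * m i - q i\<bar> \<le> 2 * pi"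
proof -
  define m where "m i = \<lfloor>(q i - d i) / (2 * pi)\<rfloor>" for i
  have "\<bar>d i + 2 * pi * m i - q i\<bar> \<le> 2 * pi" for i
  proof -
    have "of_int (m i) \<le> (q i - d i) / (2 * pi)" "(q i - d i) / (2 * pi) < of_int (m i) + 1"
      unfolding m_def by linarith+
    then have "2 * pi * m i \<le> q i - d i" "q i - d i < 2 * pi * m i + 2 * pi"
      using pi_gt_zero by (simp_all add: field_simps)
    then show ?thesis by (simp add: abs_le_iff)
  qed
  then show ?thesis by blast
qed

text \<open>Piecewise constant controls realise, from any initial state and exactly, every
  displacement in the box of radius \<open>2\<pi>\<close> around a fixed point \<open>p\<close>: the endpoint map of
  the previous lemma is inverted on that box by Brouwer's theorem.\<close>
lemma exact_displacement:
  fixes \<omega> :: "'n::finite \<Rightarrow> real"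
  assumes inj: "inj \<omega>" and pos: "\<forall>i. \<omega> i > 0"
  obtains p :: "real^'n" where "\<And>x d. \<forall>i. \<bar>d$i - p$i\<bar> \<le> 2 * pi \<Longrightarrow>
      \<exists>segs. (\<forall>q\<in>set segs. snd q \<ge> 0 \<and> admissible_value \<omega> (fst q)) \<and>
             (\<forall>i. flowall \<omega> segs x i = x i + d$i)"
proof -
  obtain cs \<tau> p where adm: "\<forall>c\<in>set cs. admissible_value \<omega> c" and cont: "\<forall>c. continuous_on UNIV (\<tau> c)"
    and near: "\<And>x y i. \<bar>flowall \<omega> (map (\<lambda>c. (c, \<tau> c y)) cs) x i - x i - y$i\<bar> \<le> 2 * pi * length cs"
    and nonneg: "\<And>y. \<forall>i. \<bar>y$i - p$i\<bar> \<le> 2 * pi * length cs + 2 * pi \<Longrightarrow> \<forall>c\<in>set cs. \<tau> c y \<ge> 0"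
    using controlled_displacement[OF inj pos] by blast
  have "\<exists>segs. (\<forall>q\<in>set segs. snd q \<ge> 0 \<and> admissible_value \<omega> (fst q)) \<and>
      (\<forall>i. flowall \<omega> segs x i = x i + d$i)" if d: "\<forall>i. \<bar>d$i - p$i\<bar> \<le> 2 * pi" for x d
  proof -
    define segs where "segs y = map (\<lambda>c. (c, \<tau> c y)) cs" for y
    have "continuous_on UNIV (\<lambda>y. \<chi> i. flowall \<omega> (segs y) x i - x i)"
      unfolding segs_def using flowall_cont[OF pos adm cont]
      by (auto intro!: continuous_intros continuous_on_vec_lambda)
    from bounded_perturbation_surj[OF this, of "2 * pi * length cs" d]
    obtain y where y: "\<forall>i. flowall \<omega> (segs y) x i - x i = d$i"
      and y_box: "\<forall>i. \<bar>y$i - d$i\<bar> \<le> 2 * pi * length cs"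
      using near unfolding segs_def by (auto simp: vec_eq_iff)
    have "\<bar>y$i - p$i\<bar> \<le> 2 * pi * length cs + 2 * pi" for i
      using y_box[rule_format, of i] d[rule_format, of i] unfolding abs_le_iff by linarith
    then have "\<forall>q\<in>set (segs y). snd q \<ge> 0 \<and> admissible_value \<omega> (fst q)"
      using nonneg adm unfolding segs_def by force
    moreover have "\<forall>i. flowall \<omega> (segs y) x i = x i + d$i"
      using y by (simp add: diff_eq_eq add.commute)
    ultimately show ?thesis by blast
  qed
  then show ?thesis using that by blast
qed

theorem mainTheorem2:
  fixes \<omega> z :: "'n::finite \<Rightarrow> real"
  assumes "inj \<omega>"
    and "\<forall>i. \<omega> i > 0"
    and "\<forall>i. z i = 2 / \<omega> i"
  shows "\<forall>\<Theta>0 \<Theta>1 :: 'n \<Rightarrow> real. \<exists>T \<ge> 0. \<exists>u \<theta>.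
           admissible_control T u \<and> sniper_trajectory \<omega> z u T \<theta> \<and>
           torus_eq (\<theta> 0) \<Theta>0 \<and> torus_eq (\<theta> T) \<Theta>1"
proof (intro allI)
  fix \<Theta>0 \<Theta>1 :: "'n \<Rightarrow> real"
  obtain p where reach: "\<And>x d. \<forall>i. \<bar>d$i - p$i\<bar> \<le> 2 * pi \<Longrightarrow>
      \<exists>segs. (\<forall>q\<in>set segs. snd q \<ge> 0 \<and> admissible_value \<omega> (fst q)) \<and>
             (\<forall>i. flowall \<omega> segs x i = x i + d$i)"
    using exact_displacement[OF assms(1,2)] by blast
  txt \<open>Aim at a lift of \<open>\<Theta>1\<close> whose displacement from \<open>\<Theta>0\<close> lies in the reachable box.\<close>
  obtain m :: "'n \<Rightarrow> int" where m: "\<forall>i. \<bar>\<Theta>1 i - \<Theta>0 i + 2 * pi * m i - p$i\<bar> \<le> 2 * pi"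
    using shift_into_box[of "\<lambda>i. \<Theta>1 i - \<Theta>0 i" "\<lambda>i. p$i"] by auto
  then obtain segs where segs: "\<forall>q\<in>set segs. snd q \<ge> 0 \<and> admissible_value \<omega> (fst q)"
    and final: "\<forall>i. flowall \<omega> segs \<Theta>0 i = \<Theta>1 i + 2 * pi * m i"
    using reach[of "\<chi> i. \<Theta>1 i - \<Theta>0 i + 2 * pi * m i" \<Theta>0] by auto
  obtain u \<theta> where "admissible_control (sum_list (map snd segs)) u"
    "sniper_trajectory \<omega> z u (sum_list (map snd segs)) \<theta>"
    "\<theta> 0 = \<Theta>0" "\<theta> (sum_list (map snd segs)) = flowall \<omega> segs \<Theta>0"
    using piecewise_constant_traj[OF assms(2,3) segs] by blast
  moreover have "sum_list (map snd segs) \<ge> 0" using segs by (auto intro!: sum_list_nonneg)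
  moreover have "torus_eq (flowall \<omega> segs \<Theta>0) \<Theta>1" "torus_eq \<Theta>0 \<Theta>0"
    unfolding torus_eq_def using final by (metis add_diff_cancel_left' diff_self mult_zero_right of_int_0)+
  ultimately show "\<exists>T \<ge> 0. \<exists>u \<theta>. admissible_control T u \<and> sniper_trajectory \<omega> z u T \<theta> \<and>
      torus_eq (\<theta> 0) \<Theta>0 \<and> torus_eq (\<theta> T) \<Theta>1"
    by metis
qed

end
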